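(* Let $(G,\ell,\mathcal{C})$ be a triplet and let $C_1,C_2,\ldots,C_{q+1}\subseteq V(G)$ be pairwise disjoint vertex sets which pairwise have the same type in $(G,\ell,\mathcal{C})$. Let $\phi$ be an FO formula in prenex form having $q$ quantifiers. Then $G,\ell,\mathcal{C}\models\phi$ if and only if $G\setminus C_1,\ell,\mathcal{C}'\models\phi$, where $\mathcal{C}'$ is the restriction of $\mathcal{C}$ to $V(G)\setminus C_1$.
   Context: Graphs are finite and simple. There are vertex constants $u_1,u_2,\ldots$ and set constants $D_1,D_2,\ldots$, vertex variables $x_1,x_2,\ldots$ and set variables $X_1,X_2,\ldots$. A triplet $(G,\ell,\mathcal{C})$ consists of a graph $G$, a partial function $\ell$ (labeling) from vertex constants to $V(G)$, and a partial function $\mathcal{C}$ (coloring) from set constants to subsets of $V(G)$. MSO formulas are generated by $\phi\to\exists X.\phi\mid\exists x.\phi\mid\phi\lor\phi\mid\neg\phi\mid y\sim y\mid y=y\mid y\in Y$, where $y$ is a vertex variable or vertex constant and $Y$ a set variable or set constant; an FO formula is an MSO formula using no set variables. Semantics: $G,\ell,\mathcal{C}\models u_i\in D_j$ iff $\ell(u_i)$ is defined and $\ell(u_i)\in\mathcal{C}(D_j)$ (with $\mathcal{C}(D_j)$ defined); $u_i=u_j$ iff both are defined and $\ell(u_i)=\ell(u_j)$; $u_i\sim u_j$ iff both defined and $\ell(u_i)\ell(u_j)\in E(G)$; $\lor,\neg$ as usual; $G,\ell,\mathcal{C}\models\exists x_i.\phi$ iff there is $v\in V(G)$ such that $G,\ell',\mathcal{C}\models\phi[x_i\setminus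 u_i]$, where $\ell(u_i)$ is undefined, $\phi[x_i\setminus u_i]$ replaces every occurrence of $x_i$ by $u_i$, and $\ell'$ agrees with $\ell$ except $\ell'(u_i)=v$; similarly $G,\ell,\mathcal{C}\models\exists X_i.\phi$ iff there is $S\subseteq V(G)$ such that $G,\ell,\mathcal{C}'\models\phi[X_i\setminus D_i]$ where $\mathcal{C}(D_i)$ is undefined and $\mathcal{C}'$ agrees with $\mathcal{C}$ except $\mathcal{C}'(D_i)=S$. Otherwise the formula is not satisfied. Prenex form: all quantifiers at the beginning. An isomorphism between triplets $(G_1,\ell_1,\mathcal{C}_1)$ and $(G_2,\ell_2,\mathcal{C}_2)$ is a bijection $f:V(G_1)\to V(G_2)$ preserving adjacency and non-adjacency such that for every $u_i$ either both $\ell_1(u_i),\ell_2(u_i)$ are undefined or $f(\ell_1(u_i))=\ell_2(u_i)$, and for every $D_i$ either both $\mathcal{C}_1(D_i),\mathcal{C}_2(D_i)$ are undefined or $f(\mathcal{C}_1(D_i))=\mathcal{C}_2(D_i)$. Two sets $C_1,C_2\subseteq V(G)$ have the same type in $(G,\ell,\mathcal{C})$ if there is an isomorphism $f$ from $(G,\ell,\mathcal{C})$ to itself mapping elements of $C_1$ to $C_2$, elements of $C_2$ to $C_1$, and every vertex of $V(G)\setminus(C_1\cup C_2)$ to itself. The restriction of $\mathcal{C}$ to $V(G)\setminus C_1$ is the coloring $\mathcal{C}'$ with $\mathcal{C}'(D_i)=\mathcal{C}(D_i)\setminus C_1$ whenever $\mathcal{C}(D_i)$ is defined, and undefined otherwise.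 *)

theory Defs
  imports Main
begin

datatype vterm = VVar nat | VConst nat
datatype sterm = SVar nat | SConst nat

datatype fm =
    ExV nat fm
  | ExS nat fm
  | Or fm fm
  | Neg fm
  | Adj vterm vterm
  | Eq vterm vterm
  | Mem vterm sterm

fun map_fm :: "(vterm \<Rightarrow> vterm) \<Rightarrow> (sterm \<Rightarrow> sterm) \<Rightarrow> fm \<Rightarrow> fm" where
  "map_fm f g (ExV i p) = ExV i (map_fm f g p)"
| "map_fm f g (ExS i p) = ExS i (map_fm f g p)"
| "map_fm f g (Or p q) = Or (map_fm f g p) (map_fm f g q)"
| "map_fm f g (Neg p) = Neg (map_fm f g p)"
| "map_fm f g (Adj a b) = Adj (f a) (f b)"
| "map_fm f g (Eq a b) = Eq (f a) (f b)"
| "map_fm f g (Mem a S) = Mem (f a) (g S)"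

lemma size_map_fm[simp]: "size (map_fm f g p) = size p"
  by (induction p) auto

definition substV :: "nat \<Rightarrow> fm \<Rightarrow> fm" where
  "substV i = map_fm (\<lambda>t. if t = VVar i then VConst i else t) id"

definition substS :: "nat \<Rightarrow> fm \<Rightarrow> fm" where
  "substS i = map_fm id (\<lambda>t. if t = SVar i then SConst i else t)"

text \<open>A graph is given by a vertex set V and an adjacency relation E; a labeling is a
  partial function from (indices of) vertex constants to vertices, a coloring a partial
  function from (indices of) set constants to vertex sets.\<close>

function sat :: "'v set \<Rightarrow> ('v \<Rightarrow> 'v \<Rightarrow> bool) \<Rightarrow> (nat \<Rightarrow> 'v option)
    \<Rightarrow> (nat \<Rightarrow> 'v set option) \<Rightarrow> fm \<Rightarrow> bool" where
  "sat V E l C (ExV i p) =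
     (l i = None \<and> (\<exists>v\<in>V. sat V E (l(i := Some v)) C (substV i p)))"
| "sat V E l C (ExS i p) =
     (C i = None \<and> (\<exists>S. S \<subseteq> V \<and> sat V E l (C(i := Some S)) (substS i p)))"
| "sat V E l C (Or p q) = (sat V E l C p \<or> sat V E l C q)"
| "sat V E l C (Neg p) = (\<not> sat V E l C p)"
| "sat V E l C (Adj a b) =
     (case (a, b) of (VConst i, VConst j) \<Rightarrow>
        (case (l i, l j) of (Some v, Some w) \<Rightarrow> E v w | _ \<Rightarrow> False)
      | _ \<Rightarrow> False)"
| "sat V E l C (Eq a b) =
     (case (a, b) of (VConst i, VConst j) \<Rightarrow>
        (case (l i, l j) of (Some v, Some w) \<Rightarrow> v = w | _ \<Rightarrow> False)
      | _ \<Rightarrow> False)"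
| "sat V E l C (Mem a S) =
     (case (a, S) of (VConst i, SConst j) \<Rightarrow>
        (case (l i, C j) of (Some v, Some D) \<Rightarrow> v \<in> D | _ \<Rightarrow> False)
      | _ \<Rightarrow> False)"
  by pat_completeness auto
termination
  by (relation "measure (\<lambda>(V, E, l, C, p). size p)")
     (auto simp: substV_def substS_def)

fun no_setvar_vt :: "sterm \<Rightarrow> bool" where
  "no_setvar_vt (SVar _) = False"
| "no_setvar_vt (SConst _) = True"

fun is_FO :: "fm \<Rightarrow> bool" where
  "is_FO (ExV i p) = is_FO p"
| "is_FO (ExS i p) = False"
| "is_FO (Or p q) = (is_FO p \<and> is_FO q)"
| "is_FO (Neg p) = is_FO p"
| "is_FO (Adj a b) = True"
| "is_FO (Eq a b) = True"
| "is_FO (Mem a S) = no_setvar_vt S"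

fun qfree :: "fm \<Rightarrow> bool" where
  "qfree (ExV i p) = False"
| "qfree (ExS i p) = False"
| "qfree (Or p q) = (qfree p \<and> qfree q)"
| "qfree (Neg p) = qfree p"
| "qfree _ = True"

text \<open>Prenex form: a prefix of quantifiers (possibly interleaved with negations, as the
  grammar has no universal quantifier) followed by a quantifier-free matrix.\<close>
fun prenex :: "fm \<Rightarrow> bool" where
  "prenex (ExV i p) = prenex p"
| "prenex (ExS i p) = prenex p"
| "prenex (Neg p) = prenex p"
| "prenex p = qfree p"

fun nquant :: "fm \<Rightarrow> nat" where
  "nquant (ExV i p) = Suc (nquant p)"
| "nquant (ExS i p) = Suc (nquant p)"
| "nquant (Or p q) = nquant p + nquant q"
| "nquant (Neg p) = nquant p"
| "nquant _ = 0"

definition simple_graph :: "'v set \<Rightarrow> ('v \<Rightarrow> 'v \<Rightarrow> bool) \<Rightarrow> bool" where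
  "simple_graph V E \<longleftrightarrow> finite V \<and> (\<forall>x y. E x y \<longrightarrow> x \<in> V \<and> y \<in> V)
     \<and> (\<forall>x y. E x y \<longrightarrow> E y x) \<and> (\<forall>x. \<not> E x x)"

definition triplet :: "'v set \<Rightarrow> ('v \<Rightarrow> 'v \<Rightarrow> bool) \<Rightarrow> (nat \<Rightarrow> 'v option)
    \<Rightarrow> (nat \<Rightarrow> 'v set option) \<Rightarrow> bool" where
  "triplet V E l C \<longleftrightarrow> simple_graph V E
     \<and> (\<forall>i v. l i = Some v \<longrightarrow> v \<in> V) \<and> (\<forall>j S. C j = Some S \<longrightarrow> S \<subseteq> V)"

definition triplet_iso ::
  "('v \<Rightarrow> 'w) \<Rightarrow> 'v set \<Rightarrow> ('v \<Rightarrow> 'v \<Rightarrow> bool) \<Rightarrow> (nat \<Rightarrow> 'v option) \<Rightarrow> (nat \<Rightarrow> 'v set option)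
   \<Rightarrow> 'w set \<Rightarrow> ('w \<Rightarrow> 'w \<Rightarrow> bool) \<Rightarrow> (nat \<Rightarrow> 'w option) \<Rightarrow> (nat \<Rightarrow> 'w set option) \<Rightarrow> bool" where
  "triplet_iso f V1 E1 l1 C1 V2 E2 l2 C2 \<longleftrightarrow>
     bij_betw f V1 V2
   \<and> (\<forall>x\<in>V1. \<forall>y\<in>V1. E1 x y \<longleftrightarrow> E2 (f x) (f y))
   \<and> (\<forall>i. map_option f (l1 i) = l2 i)
   \<and> (\<forall>j. map_option (image f) (C1 j) = C2 j)"

definition same_type :: "'v set \<Rightarrow> ('v \<Rightarrow> 'v \<Rightarrow> bool) \<Rightarrow> (nat \<Rightarrow> 'v option)
    \<Rightarrow> (nat \<Rightarrow> 'v set option) \<Rightarrow> 'v set \<Rightarrow> 'v set \<Rightarrow> bool" where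
  "same_type V E l C A B \<longleftrightarrow> A \<subseteq> V \<and> B \<subseteq> V \<and>
     (\<exists>f. triplet_iso f V E l C V E l C
        \<and> (\<forall>x\<in>A. f x \<in> B) \<and> (\<forall>x\<in>B. f x \<in> A)
        \<and> (\<forall>x\<in>V - (A \<union> B). f x = x))"

definition del_edges :: "('v \<Rightarrow> 'v \<Rightarrow> bool) \<Rightarrow> 'v set \<Rightarrow> 'v \<Rightarrow> 'v \<Rightarrow> bool" where
  "del_edges E A = (\<lambda>x y. E x y \<and> x \<notin> A \<and> y \<notin> A)"

definition restrict_col :: "(nat \<Rightarrow> 'v set option) \<Rightarrow> 'v set \<Rightarrow> nat \<Rightarrow> 'v set option" where
  "restrict_col C A = (\<lambda>j. map_option (\<lambda>S. S - A) (C j))"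

end

(*
  Automorphisms of a triplet preserve satisfaction. A witness for an existential
  quantifier that lies in C_1 can therefore be replaced, via the automorphism swapping
  C_1 with another class C_j, by a witness in C_j, i.e. outside C_1. Once a vertex w
  outside C_1 is labelled, the classes not containing w still pairwise have the same
  type, because the swapping automorphisms fix w; by disjointness at most one class
  contains w. So each quantifier uses up at most one class, and q+1 classes leave a
  second class available at every one of the q quantifiers. At the quantifier-free
  matrix, deleting C_1 is invisible because no label lies in it.
*)
theory Submission
  imports Defs "HOL-Library.Disjoint_Sets"
begin

lemma qfree_map_fm [simp]: "qfree (map_fm f g p) = qfree p"
  by (induction p) auto

lemma prenex_map_fm [simp]: "prenex (map_fm f g p) = prenex p"
  by (induction p) auto

lemma nquant_map_fm [simp]: "nquant (map_fm f g p) = nquant p"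
  by (induction p) auto

lemma is_FO_map_fm_id [simp]: "is_FO (map_fm f id p) = is_FO p"
  by (induction p) auto

lemma substV_preserves [simp]:
  "is_FO (substV i p) = is_FO p" "prenex (substV i p) = prenex p" "nquant (substV i p) = nquant p"
  by (simp_all add: substV_def)

definition labels_within :: "'v set \<Rightarrow> (nat \<Rightarrow> 'v option) \<Rightarrow> (nat \<Rightarrow> 'v set option) \<Rightarrow> bool" where
  "labels_within V l C \<longleftrightarrow> ran l \<subseteq> V \<and> (\<forall>S\<in>ran C. S \<subseteq> V)"

lemma triplet_imp_labels_within: "triplet V E l C \<Longrightarrow> labels_within V l C"
  unfolding triplet_def labels_within_def ran_def by blast

lemma labels_within_upd_label:
  "labels_within V l C \<Longrightarrow> v \<in> V \<Longrightarrow> labels_within V (l(i \<mapsto> v)) C"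
  by (auto simp: labels_within_def ran_def)

lemma labels_within_upd_col:
  "labels_within V l C \<Longrightarrow> S \<subseteq> V \<Longrightarrow> labels_within V l (C(i \<mapsto> S))"
  by (auto simp: labels_within_def ran_def)

lemma sat_delete_qfree:
  assumes "qfree p" "ran l \<inter> A = {}"
  shows "sat V E l C p \<longleftrightarrow> sat (V - A) (del_edges E A) l (restrict_col C A) p"
  using assms
proof (induction p)
  case (Adj a b) then show ?case
    by (auto simp: del_edges_def ran_def split: vterm.splits option.splits)
next
  case (Eq a b) then show ?case
    by (auto split: vterm.splits option.splits)
next
  case (Mem a S) then show ?case
    by (auto simp: restrict_col_def ran_def split: vterm.splits sterm.splits option.splits)
qed auto

lemma triplet_iso_upd_label:
  "triplet_iso f V E l C V' E' l' C' \<Longrightarrow>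
   triplet_iso f V E (l(i \<mapsto> v)) C V' E' (l'(i \<mapsto> f v)) C'"
  by (auto simp: triplet_iso_def)

lemma triplet_iso_upd_col:
  "triplet_iso f V E l C V' E' l' C' \<Longrightarrow>
   triplet_iso f V E l (C(i \<mapsto> S)) V' E' l' (C'(i \<mapsto> f ` S))"
  by (auto simp: triplet_iso_def)

lemma sat_triplet_iso:
  assumes "triplet_iso f V E l C V' E' l' C'" "labels_within V l C"
  shows "sat V E l C p \<longleftrightarrow> sat V' E' l' C' p"
  using assms
proof (induction V E l C p arbitrary: l' C' rule: sat.induct)
  case (1 V E l C i p)
  have bij: "bij_betw f V V'" and "map_option f (l i) = l' i"
    using "1.prems"(1) by (auto simp: triplet_iso_def)
  then have "l i = None \<longleftrightarrow> l' i = None"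
    by auto
  moreover have "sat V E (l(i \<mapsto> v)) C (substV i p) \<longleftrightarrow> sat V' E' (l'(i \<mapsto> f v)) C' (substV i p)"
    if "v \<in> V" for v
    using "1.IH"[OF that triplet_iso_upd_label[OF "1.prems"(1)]]
      labels_within_upd_label[OF "1.prems"(2) that] by (simp add: fun_upd_def)
  ultimately show ?case
    using bij by (auto simp: bij_betw_def)
next
  case (2 V E l C i p)
  have "V' = f ` V" and "map_option (image f) (C i) = C' i"
    using "2.prems"(1) by (auto simp: triplet_iso_def bij_betw_def)
  have step: "sat V E l (C(i \<mapsto> S)) (substS i p) \<longleftrightarrow> sat V' E' l' (C'(i \<mapsto> f ` S)) (substS i p)"
    if "S \<subseteq> V" for S
    using "2.IH"[of S, OF triplet_iso_upd_col[OF "2.prems"(1)]]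
      labels_within_upd_col[OF "2.prems"(2) that] by (simp add: fun_upd_def)
  have "(\<exists>S\<subseteq>V. sat V E l (C(i \<mapsto> S)) (substS i p))
      \<longleftrightarrow> (\<exists>S\<subseteq>V. sat V' E' l' (C'(i \<mapsto> f ` S)) (substS i p))"
    using step by blast
  also have "\<dots> \<longleftrightarrow> (\<exists>S'\<subseteq>V'. sat V' E' l' (C'(i \<mapsto> S')) (substS i p))"
    unfolding \<open>V' = f ` V\<close> by (auto simp: subset_image_iff)
  finally show ?case
    using \<open>map_option (image f) (C i) = C' i\<close> by auto
next
  case (5 V E l C a b)
  then have "l' = (\<lambda>i. map_option f (l i))" "\<forall>x\<in>V. \<forall>y\<in>V. E x y \<longleftrightarrow> E' (f x) (f y)"
    by (auto simp: triplet_iso_def)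
  with "5.prems"(2) show ?case
    by (auto simp: labels_within_def ran_def split: vterm.splits option.splits)
next
  case (6 V E l C a b)
  then have "l' = (\<lambda>i. map_option f (l i))" "inj_on f V"
    by (auto simp: triplet_iso_def bij_betw_def)
  with "6.prems"(2) show ?case
    by (auto simp: labels_within_def ran_def split: vterm.splits option.splits dest: inj_onD)
next
  case (7 V E l C a S)
  then have "l' = (\<lambda>i. map_option f (l i))" "C' = (\<lambda>j. map_option (image f) (C j))" "inj_on f V"
    by (auto simp: triplet_iso_def bij_betw_def)
  with "7.prems"(2) show ?case
    by (auto simp: labels_within_def ran_def split: vterm.splits sterm.splits option.splits)
      (blast dest: inj_onD)
qed auto

lemma same_type_upd_label:
  assumes "same_type V E l C A B" "v \<in> V - (A \<union> B)"
  shows "same_type V E (l(i \<mapsto> v)) C A B"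
proof -
  obtain f where iso: "triplet_iso f V E l C V E l C"
    and AB: "\<forall>x\<in>A. f x \<in> B" "\<forall>x\<in>B. f x \<in> A" and fixed: "\<forall>x\<in>V - (A \<union> B). f x = x"
    using assms(1) unfolding same_type_def by blast
  have "triplet_iso f V E (l(i \<mapsto> v)) C V E (l(i \<mapsto> v)) C"
    using triplet_iso_upd_label[OF iso, of i v] fixed assms(2) by simp
  with AB fixed assms(1) show ?thesis
    unfolding same_type_def by (intro conjI exI[of _ f]) auto
qed

lemma same_type_ran_disjoint:
  assumes "same_type V E l C A B" "ran l \<inter> B = {}"
  shows "ran l \<inter> A = {}"
proof -
  obtain f where iso: "triplet_iso f V E l C V E l C" and AB: "\<forall>x\<in>A. f x \<in> B"
    using assms(1) unfolding same_type_def by blast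
  have "f v = v" if v: "v \<in> ran l" for v
  proof -
    obtain k where "l k = Some v"
      using v by (auto simp: ran_def)
    moreover have "map_option f (l k) = l k"
      using iso by (simp add: triplet_iso_def)
    ultimately show ?thesis
      by simp
  qed
  with AB assms(2) show ?thesis
    by (metis disjoint_iff)
qed

lemma sat_same_type_witness:
  assumes "same_type V E l C A B" "labels_within V l C" "v \<in> A" "sat V E (l(i \<mapsto> v)) C p"
  shows "\<exists>w\<in>B. sat V E (l(i \<mapsto> w)) C p"
proof -
  obtain f where iso: "triplet_iso f V E l C V E l C" and AB: "\<forall>x\<in>A. f x \<in> B" and "A \<subseteq> V"
    using assms(1) unfolding same_type_def by blast
  have "v \<in> V"
    using assms(3) \<open>A \<subseteq> V\<close> by blast
  have "sat V E (l(i \<mapsto> v)) C p \<longleftrightarrow> sat V E (l(i \<mapsto> f v)) C p"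
    by (rule sat_triplet_iso[OF triplet_iso_upd_label[OF iso] labels_within_upd_label[OF assms(2) \<open>v \<in> V\<close>]])
  with AB assms(3,4) show ?thesis
    by blast
qed

definition same_type_family :: "'v set \<Rightarrow> ('v \<Rightarrow> 'v \<Rightarrow> bool) \<Rightarrow> (nat \<Rightarrow> 'v option)
    \<Rightarrow> (nat \<Rightarrow> 'v set option) \<Rightarrow> ('i \<Rightarrow> 'v set) \<Rightarrow> 'i set \<Rightarrow> bool" where
  "same_type_family V E l C Cs I \<longleftrightarrow> disjoint_family_on Cs I
     \<and> pairwise (\<lambda>j k. same_type V E l C (Cs j) (Cs k)) I \<and> (\<forall>j\<in>I. ran l \<inter> Cs j = {})"

lemma same_type_family_upd_label:
  assumes "same_type_family V E l C Cs I" "v \<in> V"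
  shows "same_type_family V E (l(i \<mapsto> v)) C Cs {j\<in>I. v \<notin> Cs j}"
  unfolding same_type_family_def
proof (intro conjI)
  show "disjoint_family_on Cs {j\<in>I. v \<notin> Cs j}"
    by (rule disjoint_family_on_mono[of _ I]) (use assms(1) in \<open>auto simp: same_type_family_def\<close>)
  show "pairwise (\<lambda>j k. same_type V E (l(i \<mapsto> v)) C (Cs j) (Cs k)) {j\<in>I. v \<notin> Cs j}"
    using assms by (auto simp: same_type_family_def pairwise_def intro: same_type_upd_label)
  show "\<forall>j\<in>{j\<in>I. v \<notin> Cs j}. ran (l(i \<mapsto> v)) \<inter> Cs j = {}"
    using assms(1) by (auto simp: same_type_family_def ran_def)
qed

lemma card_le_Suc_card_avoiding:
  assumes "disjoint_family_on Cs I" "finite I"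
  shows "card I \<le> Suc (card {j\<in>I. v \<notin> Cs j})"
proof -
  have "card {j\<in>I. v \<in> Cs j} \<le> Suc 0"
    using assms by (auto simp: card_le_Suc0_iff_eq disjoint_family_on_def)
  moreover have "card I = card ({j\<in>I. v \<in> Cs j} \<union> {j\<in>I. v \<notin> Cs j})"
    by (rule arg_cong[where f = card]) blast
  then have "card I \<le> card {j\<in>I. v \<in> Cs j} + card {j\<in>I. v \<notin> Cs j}"
    using card_Un_le by simp
  ultimately show ?thesis
    by linarith
qed

lemma sat_delete_same_type_class:
  assumes "same_type_family V E l C Cs I" "k \<in> I" "labels_within V l C"
    and "is_FO p" "prenex p" "nquant p < card I"
  shows "sat V E l C p \<longleftrightarrow> sat (V - Cs k) (del_edges E (Cs k)) l (restrict_col C (Cs k)) p"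
  using assms
proof (induction V E l C p arbitrary: I rule: sat.induct)
  case (1 V E l C i p)
  define A where "A = Cs k"
  define \<psi> where "\<psi> = substV i p"
  have fin: "finite I"
    using "1.prems"(6) card.infinite by force
  have IH: "sat V E (l(i \<mapsto> w)) C \<psi> \<longleftrightarrow>
      sat (V - A) (del_edges E A) (l(i \<mapsto> w)) (restrict_col C A) \<psi>"
    if w: "w \<in> V - A" for w
  proof -
    let ?I = "{j\<in>I. w \<notin> Cs j}"
    have "card I \<le> Suc (card ?I)"
      using "1.prems"(1) fin by (intro card_le_Suc_card_avoiding) (simp_all add: same_type_family_def)
    then have "nquant \<psi> < card ?I"
      using "1.prems"(6) by (simp add: \<psi>_def)
    moreover have "same_type_family V E (l(i \<mapsto> w)) C Cs ?I"
      using "1.prems"(1) w by (intro same_type_family_upd_label) auto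
    moreover have "k \<in> ?I"
      using "1.prems"(2) w A_def by simp
    moreover have "labels_within V (l(i \<mapsto> w)) C"
      using "1.prems"(3) w by (intro labels_within_upd_label) auto
    ultimately show ?thesis
      using "1.IH"[of w ?I] "1.prems"(4,5) w by (simp add: A_def \<psi>_def fun_upd_def)
  qed
  have "\<not> I \<subseteq> {k}"
    using "1.prems"(6) card_mono[of "{k}" I] by auto
  then obtain j where "j \<in> I" "j \<noteq> k"
    by blast
  then have st: "same_type V E l C A (Cs j)" and "A \<inter> Cs j = {}"
    using "1.prems"(1,2) A_def by (auto simp: same_type_family_def pairwise_def disjoint_family_on_def)
  moreover have "Cs j \<subseteq> V"
    using st by (simp add: same_type_def)
  ultimately have move: "\<exists>w\<in>V - A. sat V E (l(i \<mapsto> w)) C \<psi>"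
    if "v \<in> A" "sat V E (l(i \<mapsto> v)) C \<psi>" for v
    using sat_same_type_witness[OF st "1.prems"(3) that] by blast
  have "sat V E l C (ExV i p) \<longleftrightarrow> l i = None \<and> (\<exists>v\<in>V. sat V E (l(i \<mapsto> v)) C \<psi>)"
    by (simp add: \<psi>_def)
  also have "\<dots> \<longleftrightarrow> l i = None \<and> (\<exists>v\<in>V - A. sat V E (l(i \<mapsto> v)) C \<psi>)"
    using move by blast
  also have "\<dots> \<longleftrightarrow> l i = None \<and> (\<exists>v\<in>V - A. sat (V - A) (del_edges E A) (l(i \<mapsto> v)) (restrict_col C A) \<psi>)"
    using IH by auto
  also have "\<dots> \<longleftrightarrow> sat (V - A) (del_edges E A) l (restrict_col C A) (ExV i p)"
    by (simp add: \<psi>_def)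
  finally show ?case
    unfolding A_def .
next
  case (3 V E l C p q)
  then show ?case
    by (intro sat_delete_qfree) (auto simp: same_type_family_def)
next
  case (4 V E l C p)
  then show ?case
    by simp
next
  case (5 V E l C a b)
  then show ?case
    by (intro sat_delete_qfree) (auto simp: same_type_family_def)
next
  case (6 V E l C a b)
  then show ?case
    by (intro sat_delete_qfree) (auto simp: same_type_family_def)
next
  case (7 V E l C a S)
  then show ?case
    by (intro sat_delete_qfree) (auto simp: same_type_family_def)
qed simp

theorem lemma12:
  fixes V :: "'v set" and E :: "'v \<Rightarrow> 'v \<Rightarrow> bool"
    and l :: "nat \<Rightarrow> 'v option" and C :: "nat \<Rightarrow> 'v set option"
    and Cs :: "nat \<Rightarrow> 'v set" and q :: nat and \<phi> :: fm
  assumes trip: "triplet V E l C"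
    and sub: "\<forall>i\<in>{1..q+1}. Cs i \<subseteq> V"
    and disj: "\<forall>i\<in>{1..q+1}. \<forall>j\<in>{1..q+1}. i \<noteq> j \<longrightarrow> Cs i \<inter> Cs j = {}"
    and types: "\<forall>i\<in>{1..q+1}. \<forall>j\<in>{1..q+1}. i \<noteq> j \<longrightarrow> same_type V E l C (Cs i) (Cs j)"
    and lab: "\<forall>i v. l i = Some v \<longrightarrow> v \<notin> Cs 1"
    and FO: "is_FO \<phi>" and pre: "prenex \<phi>" and nq: "nquant \<phi> = q"
  shows "sat V E l C \<phi> \<longleftrightarrow> sat (V - Cs 1) (del_edges E (Cs 1)) l (restrict_col C (Cs 1)) \<phi>"
proof -
  have lab1: "ran l \<inter> Cs 1 = {}"
    using lab by (auto simp: ran_def)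
  have "ran l \<inter> Cs j = {}" if "j \<in> {1..q+1}" for j
  proof (cases "j = 1")
    case False
    with that types have "same_type V E l C (Cs j) (Cs 1)"
      by auto
    then show ?thesis
      using lab1 by (rule same_type_ran_disjoint)
  qed (use lab1 in simp)
  with disj types have "same_type_family V E l C Cs {1..q+1}"
    by (simp add: same_type_family_def disjoint_family_on_def pairwise_def)
  moreover have "labels_within V l C"
    using trip by (rule triplet_imp_labels_within)
  ultimately show ?thesis
    using FO pre nq by (intro sat_delete_same_type_class[where I = "{1..q+1}"]) auto
qed

end
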